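(* Let $H$ be a finite set, $S\subseteq\wp(H)$, $\mathcal{G}\subseteq S$, and fix $\alpha\in(0,1/2)$. Take $\kappa=\nu$, the classical rough inclusion function. Then there exist a set of integers $K\subseteq\{-1,0,1,2,\dots\}$ and a partition $\{S_i\}_{i\in K}$ of $S$ into nonempty blocks such that for every $i\in K$ and every $x\in S_i$, $x^{u_{\alpha^*}}=x^{u_i}$.
   Context: $\nu(A,B)=\#(A\cap B)/\#(A)$ if $A\neq\emptyset$ and $\nu(A,B)=1$ if $A=\emptyset$. For $x\in S$: $x^{u_{\alpha^*}}=\bigcup\{h\in\mathcal{G}:\nu(x,h)>\alpha\}$, and for an integer $k\ge -1$ the $k$-graded upper approximation is $x^{u_k}=\bigcup\{h\in\mathcal{G}:\#(h\cap x)>k\}$ (empty union $=\emptyset$). *)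

theory Defs
  imports Complex_Main
begin

definition rough_nu :: "'a set \<Rightarrow> 'a set \<Rightarrow> real" where
  "rough_nu A B = (if A = {} then 1 else real (card (A \<inter> B)) / real (card A))"

definition upper_alpha :: "'a set set \<Rightarrow> real \<Rightarrow> 'a set \<Rightarrow> 'a set" where
  "upper_alpha G \<alpha> x = \<Union> {h \<in> G. rough_nu x h > \<alpha>}"

definition upper_graded :: "'a set set \<Rightarrow> int \<Rightarrow> 'a set \<Rightarrow> 'a set" where
  "upper_graded G k x = \<Union> {h \<in> G. int (card (h \<inter> x)) > k}"

end

theory Submission
  imports Defs
begin

text \<open>For a nonempty finite \<open>x\<close>, \<open>\<nu>(x,h) > \<alpha>\<close> means \<open>#(h \<inter> x) > \<alpha> #x\<close>, and for an
  integer count this is \<open>#(h \<inter> x) > \<lfloor>\<alpha> #x\<rfloor>\<close>. So every \<open>x\<close> is served by the grade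
  \<open>\<lfloor>\<alpha> #x\<rfloor>\<close> (or \<open>-1\<close> when \<open>x = {}\<close>, where \<open>\<nu> = 1 > \<alpha>\<close> admits every granule), and the
  required partition of \<open>S\<close> is the partition into fibres of this grade.\<close>

definition rough_grade :: "real \<Rightarrow> 'a set \<Rightarrow> int" where
  "rough_grade \<alpha> x = (if x = {} then -1 else \<lfloor>\<alpha> * real (card x)\<rfloor>)"

lemma rough_grade_ge_minus_one:
  assumes "0 \<le> \<alpha>"
  shows "-1 \<le> rough_grade \<alpha> x"
proof -
  have "0 \<le> \<lfloor>\<alpha> * real (card x)\<rfloor>"
    using assms by simp
  then show ?thesis
    unfolding rough_grade_def by (simp del: zero_le_floor)
qed

lemma rough_nu_gt_iff_card_gt_floor:
  assumes "finite x" "x \<noteq> {}"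
  shows "\<alpha> < rough_nu x h \<longleftrightarrow> \<lfloor>\<alpha> * real (card x)\<rfloor> < int (card (h \<inter> x))"
proof -
  have "real (card x) > 0"
    using assms by (simp add: card_gt_0_iff)
  then have "\<alpha> < rough_nu x h \<longleftrightarrow> \<alpha> * real (card x) < real (card (x \<inter> h))"
    using assms(2) by (simp add: rough_nu_def pos_less_divide_eq)
  also have "\<dots> \<longleftrightarrow> \<lfloor>\<alpha> * real (card x)\<rfloor> < int (card (h \<inter> x))"
    by (simp add: Int_commute floor_less_iff)
  finally show ?thesis .
qed

lemma upper_alpha_eq_upper_graded_rough_grade:
  assumes "finite x" "\<alpha> < 1"
  shows "upper_alpha G \<alpha> x = upper_graded G (rough_grade \<alpha> x) x"
proof (cases "x = {}")
  case True
  then show ?thesis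
    using assms(2) by (simp add: upper_alpha_def upper_graded_def rough_nu_def rough_grade_def)
next
  case False
  then show ?thesis
    using rough_nu_gt_iff_card_gt_floor[OF assms(1) False]
    by (simp add: upper_alpha_def upper_graded_def rough_grade_def)
qed

lemma fibres_partition:
  fixes f :: "'a \<Rightarrow> 'b"
  shows "(\<forall>i\<in>f ` S. {x \<in> S. f x = i} \<noteq> {})"
    and "(\<forall>i\<in>f ` S. \<forall>j\<in>f ` S. i \<noteq> j \<longrightarrow> {x \<in> S. f x = i} \<inter> {x \<in> S. f x = j} = {})"
    and "(\<Union>i\<in>f ` S. {x \<in> S. f x = i}) = S"
  by auto

theorem mainTheorem10:
  fixes H :: "'a set" and S G :: "'a set set" and \<alpha> :: real
  assumes "finite H" and "S \<subseteq> Pow H" and "G \<subseteq> S"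
    and "0 < \<alpha>" and "\<alpha> < 1/2"
  shows "\<exists>(K :: int set) (P :: int \<Rightarrow> 'a set set).
           (\<forall>i\<in>K. -1 \<le> i) \<and>
           (\<forall>i\<in>K. P i \<noteq> {}) \<and>
           (\<forall>i\<in>K. \<forall>j\<in>K. i \<noteq> j \<longrightarrow> P i \<inter> P j = {}) \<and>
           (\<Union>i\<in>K. P i) = S \<and>
           (\<forall>i\<in>K. \<forall>x\<in>P i. upper_alpha G \<alpha> x = upper_graded G i x)"
proof -
  let ?K = "rough_grade \<alpha> ` S" and ?P = "\<lambda>i. {x \<in> S. rough_grade \<alpha> x = i}"
  have "\<forall>i\<in>?K. -1 \<le> i"
    using rough_grade_ge_minus_one assms(4) by (blast intro: less_imp_le)
  moreover have "\<forall>i\<in>?K. \<forall>x\<in>?P i. upper_alpha G \<alpha> x = upper_graded G i x"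
  proof (intro ballI)
    fix i x
    assume "x \<in> ?P i"
    then have "finite x" "rough_grade \<alpha> x = i"
      using assms(1,2) by (auto intro: finite_subset)
    then show "upper_alpha G \<alpha> x = upper_graded G i x"
      using upper_alpha_eq_upper_graded_rough_grade assms(5) by fastforce
  qed
  ultimately show ?thesis
    using fibres_partition[where f = "rough_grade \<alpha>" and S = S]
    by (intro exI[of _ ?K] exI[of _ ?P] conjI) assumption+
qed

end
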